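(* For all integers $n,m\ge0$, $$\sum_{k=0}^n\binom{n}{k}H_k(m)=\sum_{j=0}^m\binom{m}{j}\sum_{k=0}^nH_k(j)(-1)^{n-k}2^k\frac{(m-j)!}{(n-k)!}s(n-k,m-j).$$ In particular, $\sum_{k=0}^n\binom{n}{k}H_k=2^n\left(H_n-\sum_{k=1}^n\frac{1}{2^kk}\right)$.
   Context: For integers $m\ge 1$, $n\ge 0$, the multiple harmonic-like numbers are $H_n(m)=\sum_{1\le k_1+k_2+\cdots+k_m\le n}\frac{1}{k_1k_2\cdots k_m}$ (sum over positive integers $k_1,\dots,k_m$), with $H_n(0)=1$ for $n\ge 0$ and $H_0(m)=0$ for $m\ge1$. Equivalently, $\sum_{n\ge0}H_n(m)z^n=\frac{(-\ln(1-z))^m}{1-z}$. $H_n=H_n(1)=\sum_{k=1}^n\frac1k$. The (signed) Stirling numbers of the first kind $s(n,k)$ are defined by $\sum_{n\ge k}s(n,k)\frac{z^n}{n!}=\frac{\ln^k(1+z)}{k!}$, with $s(n,k)=0$ for $n<k$. *)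

theory Defs
  imports "HOL-Analysis.Analysis" "HOL-Combinatorics.Stirling"
begin

text \<open>For m = 0 the only tuple is the empty
  one, giving H_n(0) = 1; for n = 0, m \<ge> 1 the sum is empty, giving 0.\<close>
definition mhn :: "nat \<Rightarrow> nat \<Rightarrow> real" where
  "mhn n m = (\<Sum>k \<in> {k \<in> PiE {1..m} (\<lambda>_. {1..n}). (\<Sum>i=1..m. k i) \<le> n}.
                 1 / (\<Prod>i=1..m. real (k i)))"

definition stirling1s :: "nat \<Rightarrow> nat \<Rightarrow> int" where
  "stirling1s n k = (-1) ^ (n - k) * int (stirling n k)"

end

theory Submission
  imports Defs "HOL-Computational_Algebra.Formal_Power_Series"
begin

text \<open>Write \<open>G = 1/(1-x)\<close> and \<open>L = -ln(1-x)\<close>. The generating function of \<open>H\<^sub>n(m)\<close> is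
  \<open>G L\<^sup>m\<close>, and the binomial transform of a sequence with generating function \<open>f\<close> has
  generating function \<open>G \<cdot> f(x/(1-x))\<close>. Because \<open>1 - x/(1-x) = (1-2x)/(1-x)\<close>, this substitution
  turns \<open>G\<close> into \<open>G(2x)/G\<close> and \<open>L\<close> into \<open>L(2x) - L\<close>, so the binomial transform of
  \<open>G L\<^sup>m\<close> is \<open>G(2x) (L(2x) - L)\<^sup>m\<close>. Expanding the power binomially and reading off
  coefficients with \<open>[x\<^sup>p] L\<^sup>r = r! |s(p,r)| / p!\<close> gives the identity; the case \<open>m = 1\<close>,
  computed directly, is the harmonic-number formula.\<close>

unbundle no vec_syntax
notation fps_nth (infixl \<open>$\<close> 75)

definition fps_geometric :: "'a::comm_ring_1 fps" where
  "fps_geometric = Abs_fps (\<lambda>_. 1)"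

definition fps_neg_ln_one_minus :: "'a::field_char_0 fps" where
  "fps_neg_ln_one_minus = Abs_fps (\<lambda>n. if n = 0 then 0 else 1 / of_nat n)"

definition fps_binomial_transform :: "'a::comm_ring_1 fps \<Rightarrow> 'a fps" where
  "fps_binomial_transform f = Abs_fps (\<lambda>n. \<Sum>k=0..n. of_nat (n choose k) * f $ k)"

lemma fps_geometric_nth [simp]: "fps_geometric $ n = 1"
  by (simp add: fps_geometric_def)

lemma fps_neg_ln_one_minus_nth:
  "fps_neg_ln_one_minus $ n = (if n = 0 then 0 else 1 / of_nat n)"
  by (simp add: fps_neg_ln_one_minus_def)

lemma fps_neg_ln_one_minus_nth_0 [simp]: "fps_neg_ln_one_minus $ 0 = 0"
  by (simp add: fps_neg_ln_one_minus_nth)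

lemma one_minus_X_mult_fps_geometric: "(1 - fps_X) * fps_geometric = 1"
  by (simp add: fps_eq_iff algebra_simps)

lemma fps_geometric_mult_nth: "(fps_geometric * f) $ n = (\<Sum>i\<le>n. f $ i)"
  by (simp add: mult.commute[of fps_geometric] fps_mult_nth atLeast0AtMost)

lemma fps_X_geometric_power_nth:
  "(fps_geometric * (fps_X * fps_geometric) ^ k) $ n = of_nat (n choose k)"
proof (induction k arbitrary: n)
  case 0
  show ?case by simp
next
  case (Suc k)
  note IH = Suc.IH
  have shift: "(fps_geometric :: 'a fps) * (fps_X * fps_geometric) ^ Suc k
      = fps_X * (fps_geometric * (fps_geometric * (fps_X * fps_geometric) ^ k))"
    by (simp add: algebra_simps)
  show ?case
  proof (cases n)
    case (Suc n')
    have "((fps_geometric :: 'a fps) * (fps_X * fps_geometric) ^ Suc k) $ n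
        = (\<Sum>i\<le>n'. (fps_geometric * (fps_X * fps_geometric) ^ k) $ i)"
      by (simp only: shift Suc fps_X_mult_nth fps_geometric_mult_nth) simp
    also have "\<dots> = of_nat (\<Sum>i\<le>n'. i choose k)"
      by (simp add: IH)
    finally show ?thesis
      by (simp only: Suc sum_choose_upper)
  qed (simp add: shift)
qed

lemma fps_binomial_transform_eq:
  "fps_binomial_transform f = fps_geometric * (f oo (fps_X * fps_geometric))"
proof (rule fps_ext)
  fix n
  let ?W = "fps_X * fps_geometric :: 'a fps"
  have vanish: "(?W ^ j) $ i = 0" if "i < j" for i j
    using that by (simp add: power_mult_distrib fps_X_power_mult_nth)
  have "(fps_geometric * (f oo ?W)) $ n = (\<Sum>i\<le>n. \<Sum>j=0..i. f $ j * (?W ^ j) $ i)"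
    by (simp add: fps_geometric_mult_nth fps_compose_nth)
  also have "\<dots> = (\<Sum>i\<le>n. \<Sum>j=0..n. f $ j * (?W ^ j) $ i)"
    by (intro sum.cong refl sum.mono_neutral_left) (auto simp: vanish)
  also have "\<dots> = (\<Sum>j=0..n. f $ j * (fps_geometric * ?W ^ j) $ n)"
    by (subst sum.swap) (simp add: fps_geometric_mult_nth sum_distrib_left)
  finally show "fps_binomial_transform f $ n = (fps_geometric * (f oo ?W)) $ n"
    by (simp add: fps_binomial_transform_def fps_X_geometric_power_nth mult.commute)
qed

lemma one_plus_X_mult_fps_geometric: "1 + fps_X * fps_geometric = fps_geometric"
  by (simp add: fps_eq_iff)

lemma fps_deriv_fps_geometric: "fps_deriv fps_geometric = fps_geometric * fps_geometric"
  by (simp add: fps_eq_iff fps_geometric_mult_nth)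

lemma fps_deriv_X_mult_fps_geometric:
  "fps_deriv (fps_X * fps_geometric) = fps_geometric * fps_geometric"
proof -
  have "fps_deriv (fps_X * fps_geometric) = (1 + fps_X * fps_geometric) * fps_geometric"
    by (simp add: fps_deriv_fps_geometric algebra_simps)
  then show ?thesis
    by (simp only: one_plus_X_mult_fps_geometric)
qed

lemma fps_geometric_compose_X_geometric:
  "(fps_geometric :: 'a::idom fps) * (fps_geometric oo (fps_X * fps_geometric))
     = fps_geometric oo (fps_const 2 * fps_X)"
proof -
  let ?G = "fps_geometric :: 'a fps" and ?W = "fps_X * fps_geometric :: 'a fps"
  have "((1 - fps_X) * ?G) oo ?W = 1" and "((1 - fps_X) * ?G) oo (fps_const 2 * fps_X) = 1"
    by (simp_all add: one_minus_X_mult_fps_geometric)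
  then have inv_W: "(1 - ?W) * (?G oo ?W) = 1"
    and inv_2X: "(1 - fps_const 2 * fps_X) * (?G oo (fps_const 2 * fps_X)) = 1"
    by (simp_all add: fps_compose_mult_distrib fps_compose_sub_distrib)
  have one_minus_W: "1 - ?W = ?G * (1 - fps_const 2 * fps_X)"
    by (simp add: fps_eq_iff algebra_simps)
  have "?G oo (fps_const 2 * fps_X) = (1 - ?W) * (?G oo ?W) * (?G oo (fps_const 2 * fps_X))"
    by (simp add: inv_W)
  also have "\<dots> = ?G * (?G oo ?W) * ((1 - fps_const 2 * fps_X) * (?G oo (fps_const 2 * fps_X)))"
    by (simp only: one_minus_W mult_ac)
  finally show ?thesis
    by (simp add: inv_2X)
qed

lemma fps_deriv_fps_neg_ln_one_minus: "fps_deriv fps_neg_ln_one_minus = fps_geometric"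
  by (simp add: fps_eq_iff fps_neg_ln_one_minus_nth del: of_nat_Suc)

lemma fps_geometric_mult_dilated_fps_geometric:
  "(fps_geometric :: 'a::idom fps) * (fps_geometric oo (fps_const 2 * fps_X))
     = fps_const 2 * (fps_geometric oo (fps_const 2 * fps_X)) - fps_geometric"
proof (rule fps_ext)
  fix n
  have "((fps_geometric :: 'a fps) * (fps_geometric oo (fps_const 2 * fps_X))) $ n
      = (\<Sum>i\<le>n. 2 ^ i)"
    by (simp add: fps_geometric_mult_nth)
  also have "\<dots> = 2 * 2 ^ n - 1"
    using sum_gp_basic[of "2::'a" n] by (simp add: algebra_simps)
  finally show "((fps_geometric :: 'a fps) * (fps_geometric oo (fps_const 2 * fps_X))) $ n
      = (fps_const 2 * (fps_geometric oo (fps_const 2 * fps_X)) - fps_geometric) $ n"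
    by simp
qed

lemma fps_neg_ln_one_minus_compose_X_geometric:
  "(fps_neg_ln_one_minus :: 'a::field_char_0 fps) oo (fps_X * fps_geometric)
     = (fps_neg_ln_one_minus oo (fps_const 2 * fps_X)) - fps_neg_ln_one_minus"
proof -
  let ?L = "fps_neg_ln_one_minus :: 'a fps" and ?G = "fps_geometric :: 'a fps"
  have "(fps_X * ?G) $ 0 = 0"
    by simp
  then have "fps_deriv (?L oo (fps_X * ?G)) = (?G oo (fps_X * ?G)) * (?G * ?G)"
    by (simp only: fps_compose_deriv fps_deriv_fps_neg_ln_one_minus
        fps_deriv_X_mult_fps_geometric)
  also have "\<dots> = ?G * (?G * (?G oo (fps_X * ?G)))"
    by (simp only: mult_ac)
  also have "\<dots> = ?G * (?G oo (fps_const 2 * fps_X))"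
    by (simp only: fps_geometric_compose_X_geometric)
  also have "\<dots> = fps_const 2 * (?G oo (fps_const 2 * fps_X)) - ?G"
    by (rule fps_geometric_mult_dilated_fps_geometric)
  also have "\<dots> = fps_deriv ((?L oo (fps_const 2 * fps_X)) - ?L)"
  proof -
    have "(fps_const 2 * fps_X :: 'a fps) $ 0 = 0"
      by simp
    then show ?thesis
      by (simp add: fps_compose_deriv fps_deriv_fps_neg_ln_one_minus mult.commute)
  qed
  finally show ?thesis
    unfolding fps_deriv_eq_iff by (simp add: fps_neg_ln_one_minus_nth)
qed

lemma fps_binomial_transform_geometric_mult:
  "fps_binomial_transform (fps_geometric * f)
     = (fps_geometric oo (fps_const 2 * fps_X)) * (f oo (fps_X * fps_geometric))"
  for f :: "'a::idom fps"
  by (simp add: fps_binomial_transform_eq fps_compose_mult_distrib mult.assoc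
      flip: fps_geometric_compose_X_geometric)

lemma fps_binomial_transform_geometric_mult_neg_ln_power:
  fixes L :: "'a::field_char_0 fps"
  defines "L \<equiv> fps_neg_ln_one_minus"
  shows "fps_binomial_transform (fps_geometric * L ^ m)
     = (\<Sum>j\<le>m. of_nat (m choose j)
          * (((fps_geometric * L ^ j) oo (fps_const 2 * fps_X)) * (- L) ^ (m - j)))"
proof -
  let ?D = "\<lambda>f. f oo (fps_const 2 * fps_X :: 'a fps)"
  have "fps_binomial_transform (fps_geometric * L ^ m)
      = ?D fps_geometric * (L oo (fps_X * fps_geometric)) ^ m"
    by (simp add: fps_binomial_transform_geometric_mult fps_compose_power)
  also have "\<dots> = ?D fps_geometric * (?D L + (- L)) ^ m"
    by (simp add: L_def fps_neg_ln_one_minus_compose_X_geometric)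
  also have "\<dots> = (\<Sum>j\<le>m. of_nat (m choose j) * ((?D fps_geometric * ?D L ^ j) * (- L) ^ (m - j)))"
    by (simp only: binomial_ring sum_distrib_left mult_ac)
  also have "\<dots> = (\<Sum>j\<le>m. of_nat (m choose j) * (?D (fps_geometric * L ^ j) * (- L) ^ (m - j)))"
    by (simp add: fps_compose_mult_distrib fps_compose_power)
  finally show ?thesis .
qed

lemma one_minus_X_mult_fps_deriv_nth:
  "((1 - fps_X) * fps_deriv f) $ q = of_nat (Suc q) * f $ Suc q - of_nat q * (f $ q :: 'a::comm_ring_1)"
  by (cases q) (simp_all add: algebra_simps)

lemma fact_mult_fps_neg_ln_one_minus_power_nth:
  "fact p * (fps_neg_ln_one_minus ^ r) $ p = (fact r * of_nat (stirling p r) :: 'a::field_char_0)"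
proof (induction r arbitrary: p)
  case 0
  show ?case by (cases p) simp_all
next
  case (Suc r)
  note lower_power = Suc.IH
  let ?L = "fps_neg_ln_one_minus :: 'a fps"
  have "(1 - fps_X) * fps_deriv (?L ^ Suc r) = of_nat (Suc r) * ((1 - fps_X) * fps_geometric) * ?L ^ r"
    by (simp only: fps_deriv_power' diff_Suc_1 fps_deriv_fps_neg_ln_one_minus mult_ac)
  then have derivative_equation: "(1 - fps_X) * fps_deriv (?L ^ Suc r) = of_nat (Suc r) * ?L ^ r"
    by (simp add: one_minus_X_mult_fps_geometric)
  have recurrence: "of_nat (Suc q) * (?L ^ Suc r) $ Suc q
      = of_nat q * (?L ^ Suc r) $ q + of_nat (Suc r) * (?L ^ r) $ q" for q
  proof -
    have "((1 - fps_X) * fps_deriv (?L ^ Suc r)) $ q = (of_nat (Suc r) * ?L ^ r) $ q"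
      using derivative_equation by (rule arg_cong)
    then show ?thesis
      unfolding one_minus_X_mult_fps_deriv_nth fps_mult_of_nat_nth by (simp add: algebra_simps)
  qed
  show ?case
  proof (induction p)
    case 0
    show ?case by simp
  next
    case (Suc q)
    have "fact (Suc q) * (?L ^ Suc r) $ Suc q = fact q * (of_nat (Suc q) * (?L ^ Suc r) $ Suc q)"
      by (simp only: fact_Suc mult_ac)
    also have "\<dots> = fact q * (of_nat q * (?L ^ Suc r) $ q + of_nat (Suc r) * (?L ^ r) $ q)"
      by (simp only: recurrence)
    also have "\<dots> = of_nat q * (fact q * (?L ^ Suc r) $ q) + of_nat (Suc r) * (fact q * (?L ^ r) $ q)"
      by (simp only: distrib_left mult_ac)
    also have "\<dots> = fact (Suc r) * (of_nat q * of_nat (stirling q (Suc r)) + of_nat (stirling q r))"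
      by (simp only: Suc.IH lower_power) (simp add: algebra_simps)
    finally show ?case
      by simp
  qed
qed

lemma uminus_fps_neg_ln_one_minus_power_nth:
  "((- fps_neg_ln_one_minus) ^ r) $ p
     = (-1) ^ p * fact r / fact p * (of_int (stirling1s p r) :: 'a::field_char_0)"
proof -
  have sign: "(-1) ^ p * (of_int (stirling1s p r) :: 'a) = (-1) ^ r * of_nat (stirling p r)"
  proof (cases "r \<le> p")
    case True
    then obtain d where "p = r + d"
      using le_Suc_ex by blast
    then show ?thesis
      by (simp add: stirling1s_def power_add mult.assoc flip: power_mult_distrib)
  qed (simp add: stirling1s_def)
  have "((- fps_neg_ln_one_minus) ^ r) $ p = (-1) ^ r * (fps_neg_ln_one_minus ^ r) $ p"
    by (cases "even r") (simp_all add: power_minus_odd)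
  also have "\<dots> = (-1) ^ r * (fact r * of_nat (stirling p r) / fact p)"
    by (simp flip: fact_mult_fps_neg_ln_one_minus_power_nth)
  also have "\<dots> = (-1) ^ p * fact r / fact p * (of_int (stirling1s p r) :: 'a)"
    by (simp add: sign)
  finally show ?thesis .
qed

lemma mhn_eq_sum_over_box:
  assumes "n \<le> N"
  shows "mhn n m = (\<Sum>k \<in> PiE {1..m} (\<lambda>_. {1..N}).
     if (\<Sum>i=1..m. k i) \<le> n then 1 / (\<Prod>i=1..m. real (k i)) else 0)"
proof -
  have "k i \<le> n" if "(\<Sum>i=1..m. k i) \<le> n" "i \<in> {1..m}" for k :: "nat \<Rightarrow> nat" and i
    using member_le_sum[of i "{1..m}" k] that by simp
  then have box: "{k \<in> PiE {1..m} (\<lambda>_. {1..n}). (\<Sum>i=1..m. k i) \<le> n}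
      = {k \<in> PiE {1..m} (\<lambda>_. {1..N}). (\<Sum>i=1..m. k i) \<le> n}"
    using assms by (auto simp: PiE_iff) (meson atLeastAtMost_iff order_trans)
  show ?thesis
    unfolding mhn_def box by (rule sum.inter_filter) (simp add: finite_PiE)
qed

lemma mhn_Suc: "mhn n (Suc m) = (\<Sum>t=1..n. mhn (n - t) m / real t)"
proof -
  define w where "w m k n = (if (\<Sum>i=1..m. k i) \<le> n then 1 / (\<Prod>i=1..m. real (k i)) else 0)"
    for m and k :: "nat \<Rightarrow> nat" and n
  let ?B = "\<lambda>m. PiE {1..m} (\<lambda>_. {1..n})"
  have insert_last: "{1..Suc m} = insert (Suc m) {1..m}"
    by auto
  have w_extend: "w (Suc m) (g(Suc m := t)) n = w m g (n - t) / real t"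
    if "t \<in> {1..n}" "g \<in> ?B m" for t g
  proof -
    have "(\<Sum>i=1..Suc m. (g(Suc m := t)) i) = (\<Sum>i=1..m. g i) + t"
      and "(\<Prod>i=1..Suc m. real ((g(Suc m := t)) i)) = real t * (\<Prod>i=1..m. real (g i))"
      by (simp_all add: insert_last)
    then show ?thesis
      unfolding w_def using that by auto
  qed
  have "mhn n (Suc m) = (\<Sum>k \<in> ?B (Suc m). w (Suc m) k n)"
    unfolding w_def by (rule mhn_eq_sum_over_box) simp
  also have "\<dots> = (\<Sum>p \<in> {1..n} \<times> ?B m. w (Suc m) ((\<lambda>(t, g). g(Suc m := t)) p) n)"
    unfolding insert_last PiE_insert_eq
    by (rule sum.reindex[unfolded comp_def]) (rule inj_combinator, simp)
  also have "\<dots> = (\<Sum>t=1..n. \<Sum>g \<in> ?B m. w (Suc m) (g(Suc m := t)) n)"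
    by (simp add: sum.cartesian_product case_prod_beta)
  also have "\<dots> = (\<Sum>t=1..n. \<Sum>g \<in> ?B m. w m g (n - t) / real t)"
    by (intro sum.cong refl w_extend)
  also have "\<dots> = (\<Sum>t=1..n. mhn (n - t) m / real t)"
    by (intro sum.cong refl)
      (simp add: w_def mhn_eq_sum_over_box[of "n - _" n] flip: sum_divide_distrib)
  finally show ?thesis .
qed

lemma fps_mhn: "Abs_fps (\<lambda>n. mhn n m) = fps_geometric * fps_neg_ln_one_minus ^ m"
proof (induction m)
  case 0
  show ?case by (simp add: fps_eq_iff mhn_def)
next
  case (Suc m)
  show ?case
  proof (rule fps_ext)
    fix n
    have "(fps_geometric * fps_neg_ln_one_minus ^ Suc m) $ n
        = (fps_neg_ln_one_minus * Abs_fps (\<lambda>n. mhn n m)) $ n"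
      by (simp add: Suc.IH algebra_simps)
    also have "\<dots> = (\<Sum>t=1..n. mhn (n - t) m / real t)"
      by (simp add: fps_mult_nth sum.atLeast_Suc_atMost fps_neg_ln_one_minus_nth)
    finally show "Abs_fps (\<lambda>n. mhn n (Suc m)) $ n = (fps_geometric * fps_neg_ln_one_minus ^ Suc m) $ n"
      by (simp add: mhn_Suc)
  qed
qed

lemma fps_compose_linear_mult_nth:
  "((f oo (fps_const c * fps_X)) * g) $ n = (\<Sum>k=0..n. c ^ k * f $ k * g $ (n - k))"
  for f g :: "'a::comm_ring_1 fps"
  by (simp add: fps_mult_nth)

lemma binomial_sum_mhn:
  "(\<Sum>k=0..n. real (n choose k) * mhn k m) =
     (\<Sum>j=0..m. real (m choose j) *
        (\<Sum>k=0..n. mhn k j * (-1) ^ (n - k) * 2 ^ k * fact (m - j) / fact (n - k)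
                     * real_of_int (stirling1s (n - k) (m - j))))"
proof -
  let ?L = "fps_neg_ln_one_minus :: real fps"
  have mhn_nth: "mhn k j = (fps_geometric * ?L ^ j) $ k" for k j
    by (simp flip: fps_mhn)
  have "(\<Sum>k=0..n. real (n choose k) * mhn k m) = fps_binomial_transform (fps_geometric * ?L ^ m) $ n"
    by (simp add: fps_binomial_transform_def mhn_nth)
  also have "\<dots> = (\<Sum>j=0..m. real (m choose j) *
      (((fps_geometric * ?L ^ j) oo (fps_const 2 * fps_X)) * (- ?L) ^ (m - j)) $ n)"
    by (simp add: fps_binomial_transform_geometric_mult_neg_ln_power fps_sum_nth atLeast0AtMost)
  also have "\<dots> = (\<Sum>j=0..m. real (m choose j) *
        (\<Sum>k=0..n. mhn k j * (-1) ^ (n - k) * 2 ^ k * fact (m - j) / fact (n - k)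
                     * real_of_int (stirling1s (n - k) (m - j))))"
    by (simp only: fps_compose_linear_mult_nth uminus_fps_neg_ln_one_minus_power_nth flip: mhn_nth)
      (simp add: mult_ac)
  finally show ?thesis .
qed

lemma binomial_sum_harmonic:
  "(\<Sum>k=0..n. real (n choose k) * (\<Sum>i=1..k. 1 / real i)) =
     2 ^ n * ((\<Sum>i=1..n. 1 / real i) - (\<Sum>k=1..n. 1 / (2 ^ k * real k)))"
proof -
  let ?L = "fps_neg_ln_one_minus :: real fps" and ?G = "fps_geometric :: real fps"
  have harmonic_nth: "(?G * ?L) $ k = (\<Sum>i=1..k. 1 / real i)" for k
    by (simp add: fps_geometric_mult_nth atMost_atLeast0 sum.atLeast_Suc_atMost fps_neg_ln_one_minus_nth)
  have "(\<Sum>k=0..n. real (n choose k) * (\<Sum>i=1..k. 1 / real i)) = fps_binomial_transform (?G * ?L) $ n"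
    unfolding harmonic_nth[symmetric] by (simp add: fps_binomial_transform_def)
  also have "fps_binomial_transform (?G * ?L)
      = ((?G * ?L) oo (fps_const 2 * fps_X)) - ?L * (?G oo (fps_const 2 * fps_X))"
    by (simp add: fps_binomial_transform_geometric_mult fps_neg_ln_one_minus_compose_X_geometric
        fps_compose_mult_distrib algebra_simps)
  also have "(\<dots>) $ n = 2 ^ n * (\<Sum>i=1..n. 1 / real i) - (\<Sum>k=0..n. ?L $ k * 2 ^ (n - k))"
    by (simp add: harmonic_nth fps_mult_nth[of ?L])
  also have "(\<Sum>k=0..n. ?L $ k * 2 ^ (n - k)) = 2 ^ n * (\<Sum>k=1..n. 1 / (2 ^ k * real k))"
    by (simp add: sum.atLeast_Suc_atMost fps_neg_ln_one_minus_nth sum_distrib_left power_diff)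
      (simp add: mult.commute)
  finally show ?thesis
    by (simp add: algebra_simps)
qed

theorem corollary3:
  fixes n m :: nat
  shows "((\<Sum>k=0..n. real (n choose k) * mhn k m) =
           (\<Sum>j=0..m. real (m choose j) *
              (\<Sum>k=0..n. mhn k j * (-1) ^ (n - k) * 2 ^ k * fact (m - j) / fact (n - k)
                           * real_of_int (stirling1s (n - k) (m - j))))) \<and>
         ((\<Sum>k=0..n. real (n choose k) * (\<Sum>i=1..k. 1 / real i)) =
           2 ^ n * ((\<Sum>i=1..n. 1 / real i) - (\<Sum>k=1..n. 1 / (2 ^ k * real k))))"
  by (rule conjI[OF binomial_sum_mhn binomial_sum_harmonic])

end
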